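(* Let $q\ge 2$, $n\ge 1$, $h\in F(n,q)$ and $G=\mathrm{IG}^*(h)$. Let $s\ge 1$, $c:[n]\to[s]$ and $u\in\Pi([n])$ be such that for every $i\in[n]$ at least one of the following holds: (1) for every neighbour $k$ of $i$ in $G$, $u(i)\le u(k)$; (2) for all $j,k\in[n]$ such that $c(j)=c(i)$, $u(i)<u(j)$ and $k$ is a neighbour of $j$ in $G$, we have $u(i)\le u(k)$. Then $\kappa(h,u)\le s$.
   Context: Let $q\ge 2$, $A=\{0,1,\dots,q-1\}$, $[n]=\{1,\dots,n\}$, and let $F(n,q)$ be the set of all maps $A^n\to A^n$. For $f\in F(m,q)$ and $i\in[m]$, $f_i$ is the $i$-th coordinate function and $f^i(x)=(x_1,\dots,x_{i-1},f_i(x),x_{i+1},\dots,x_m)$; for a word $w=(w_1,\dots,w_t)$ over $[m]$, $f^w=f^{w_t}\circ\cdots\circ f^{w_1}$. $\Pi([m])$ is the set of permutations of $[m]$ written as words $(w_1,\dots,w_m)$; $w(i)$ is the position of $i$ in $w$. $\mathrm{pr}_{[n]}:A^m\to A^n$ is the projection onto the first $n$ coordinates. For $m\ge n$, $(f,w)$ with $f\in F(m,q)$, $w\in\Pi([m])$ sequentializes $h\in F(n,q)$ if $\mathrm{pr}_{[n]}\circ f^w=h\circ\mathrm{pr}_{[n]}$. For $u\in\Pi([n])$, $w\in\Pi([m])$ respects $u$ if for all $i,j\in[n]$, $u(i)<u(j)$ implies $w(i)<w(j)$. $\kappa(h,u)$ is the smallest $k\ge0$ such that some $f\in F(n+k,q)$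 and $w\in\Pi([n+k])$ respecting $u$ sequentialize $h$. The interaction graph $\mathrm{IG}(h)$ is the directed graph on $[n]$ with an arc $(i,j)$ iff there exist $x,y\in A^n$ with $x_\ell=y_\ell$ for all $\ell\ne i$ and $h_j(x)\ne h_j(y)$; $\mathrm{IG}^*(h)$ is its undirected version ($\{i,j\}$ is an edge, possibly a loop, iff $(i,j)$ or $(j,i)$ is an arc). *)

theory Defs
  imports Main
begin

text \<open>Coordinates are 0-based: [n] is rendered as {0..<n}. A configuration in A^n is a
list of length n with entries < q; the i-th coordinate is xs ! i.\<close>

definition cube :: "nat \<Rightarrow> nat \<Rightarrow> nat list set" where
  "cube q n = {xs. length xs = n \<and> (\<forall>a\<in>set xs. a < q)}"

definition inF :: "nat \<Rightarrow> nat \<Rightarrow> (nat list \<Rightarrow> nat list) \<Rightarrow> bool" where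
  "inF n q f = (\<forall>x\<in>cube q n. f x \<in> cube q n)"

definition upd :: "(nat list \<Rightarrow> nat list) \<Rightarrow> nat \<Rightarrow> nat list \<Rightarrow> nat list" where
  "upd f i x = x[i := f x ! i]"

text \<open>f^w = f^{w_t} o ... o f^{w_1}  (w_1 applied first).\<close>
definition fseq :: "(nat list \<Rightarrow> nat list) \<Rightarrow> nat list \<Rightarrow> nat list \<Rightarrow> nat list" where
  "fseq f w x = fold (\<lambda>i y. upd f i y) w x"

definition isPerm :: "nat \<Rightarrow> nat list \<Rightarrow> bool" where
  "isPerm m w = (distinct w \<and> set w = {0..<m})"

definition sequentializes ::
  "nat \<Rightarrow> nat \<Rightarrow> nat \<Rightarrow> (nat list \<Rightarrow> nat list) \<Rightarrow> nat list \<Rightarrow> (nat list \<Rightarrow> nat list) \<Rightarrow> bool" where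
  "sequentializes q n m f w h = (\<forall>x\<in>cube q m. take n (fseq f w x) = h (take n x))"

definition pos :: "nat list \<Rightarrow> nat \<Rightarrow> nat" where
  "pos w i = (LEAST p. p < length w \<and> w ! p = i)"

definition respects_order :: "nat \<Rightarrow> nat list \<Rightarrow> nat list \<Rightarrow> bool" where
  "respects_order n u w = (\<forall>i<n. \<forall>j<n. pos u i < pos u j \<longrightarrow> pos w i < pos w j)"

definition kappa :: "nat \<Rightarrow> nat \<Rightarrow> (nat list \<Rightarrow> nat list) \<Rightarrow> nat list \<Rightarrow> nat" where
  "kappa q n h u = (LEAST k. \<exists>f w. inF (n + k) q f \<and> isPerm (n + k) w \<and> respects_order n u w
                                 \<and> sequentializes q n (n + k) f w h)"

definition IG_arc :: "nat \<Rightarrow> nat \<Rightarrow> (nat list \<Rightarrow> nat list) \<Rightarrow> nat \<Rightarrow> nat \<Rightarrow> bool" where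
  "IG_arc q n h i j = (i < n \<and> j < n \<and> (\<exists>x\<in>cube q n. \<exists>y\<in>cube q n.
      (\<forall>l<n. l \<noteq> i \<longrightarrow> x ! l = y ! l) \<and> h x ! j \<noteq> h y ! j))"

definition IG_edge :: "nat \<Rightarrow> nat \<Rightarrow> (nat list \<Rightarrow> nat list) \<Rightarrow> nat \<Rightarrow> nat \<Rightarrow> bool" where
  "IG_edge q n h i j = (IG_arc q n h i j \<or> IG_arc q n h j i)"

end

theory Submission
  imports Defs "HOL-Number_Theory.Cong"
begin

text \<open>Add one coordinate per colour. The sequential update first writes into the coordinate of
colour a the sum, modulo q, of the values h_j(x) over the vertices j of colour a, and then updates
the original coordinates in the order u, each to h_i(x). For this to be realised by a single map f,
the state reached just before i is updated must determine h_i(x). Since h_i only depends on the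
in-neighbours of i, this is clear under (1): all neighbours of i still carry their original value.
Under (2), every other vertex j of colour c(i) has either been updated already, exposing h_j(x),
or comes after i with all its neighbours still original, so that h_j(x) is determined as well;
subtracting these values from the checksum of colour c(i) recovers h_i(x).\<close>

lemma pos_nth:
  assumes "distinct w" "p < length w"
  shows "pos w (w ! p) = p"
  unfolding pos_def by (rule Least_equality) (use assms in \<open>auto simp: nth_eq_iff_index_eq\<close>)

lemma pos_less_length_nth_pos:
  assumes "v \<in> set w"
  shows "pos w v < length w \<and> w ! pos w v = v"
  unfolding pos_def by (rule LeastI_ex) (use assms in \<open>auto simp: in_set_conv_nth\<close>)

lemma fseq_trajectory:
  assumes "S 0 = x" and "\<And>t. t < length w \<Longrightarrow> upd f (w ! t) (S t) = S (Suc t)"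
  shows "fseq f w x = S (length w)"
proof -
  have "fold (\<lambda>i y. upd f i y) (take t w) x = S t" if "t \<le> length w" for t
    using that
  proof (induction t)
    case 0
    then show ?case using assms(1) by simp
  next
    case (Suc t)
    then have "take (Suc t) w = take t w @ [w ! t]" by (simp add: take_Suc_conv_app_nth)
    then show ?case using Suc assms(2)[of t] by simp
  qed
  from this[of "length w"] show ?thesis unfolding fseq_def by simp
qed

lemma take_cube: "x \<in> cube q (n + s) \<Longrightarrow> take n x \<in> cube q n"
  unfolding cube_def by (auto dest: in_set_takeD)

lemma nth_eq_if_in_neighbours_agree:
  assumes X: "X \<in> cube q n" and Y: "Y \<in> cube q n" and "i < n"
    and agree: "\<forall>k<n. IG_arc q n h k i \<longrightarrow> X ! k = Y ! k"
  shows "h X ! i = h Y ! i"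
proof -
  define Z where "Z t = map (\<lambda>k. if k < t then Y ! k else X ! k) [0..<n]" for t
  have Z_cube: "Z t \<in> cube q n" for t
    using X Y unfolding Z_def cube_def by (auto simp: in_set_conv_nth intro!: nth_mem)
  have "h (Z t) ! i = h X ! i" if "t \<le> n" for t
    using that
  proof (induction t)
    case 0
    have "Z 0 = X" using X unfolding Z_def cube_def by (simp add: list_eq_iff_nth_eq)
    then show ?case by simp
  next
    case (Suc t)
    show ?case
    proof (cases "IG_arc q n h t i")
      case True
      then have "Z (Suc t) = Z t" using agree Suc.prems unfolding Z_def by (auto simp: less_Suc_eq)
      then show ?thesis using Suc by simp
    next
      case False
      then have "\<forall>x\<in>cube q n. \<forall>y\<in>cube q n. (\<forall>l<n. l \<noteq> t \<longrightarrow> x ! l = y ! l) \<longrightarrow> h x ! i = h y ! i"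
        using \<open>i < n\<close> Suc.prems unfolding IG_arc_def by auto
      moreover have "\<forall>l<n. l \<noteq> t \<longrightarrow> Z (Suc t) ! l = Z t ! l" unfolding Z_def by auto
      ultimately have "h (Z (Suc t)) ! i = h (Z t) ! i" using Z_cube by blast
      then show ?thesis using Suc by simp
    qed
  qed
  moreover have "Z n = Y" using Y unfolding Z_def cube_def by (simp add: list_eq_iff_nth_eq)
  ultimately show ?thesis by (metis order_refl)
qed

lemma sum_mod_eq_imp_eq_at:
  fixes f g :: "'a \<Rightarrow> nat"
  assumes "finite J" "i \<in> J" "\<forall>j\<in>J - {i}. f j = g j"
    and "(\<Sum>j\<in>J. f j) mod q = (\<Sum>j\<in>J. g j) mod q" "f i < q" "g i < q"
  shows "f i = g i"
proof -
  have "(\<Sum>j\<in>J. f j) = f i + (\<Sum>j\<in>J - {i}. g j)" "(\<Sum>j\<in>J. g j) = g i + (\<Sum>j\<in>J - {i}. g j)"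
    using assms(1-3) by (simp_all add: sum.remove)
  then have "[f i + (\<Sum>j\<in>J - {i}. g j) = g i + (\<Sum>j\<in>J - {i}. g j)] (mod q)"
    using assms(4) by (simp add: cong_def)
  then show ?thesis using assms(5,6) by (simp add: cong_add_rcancel_nat cong_less_modulus_unique_nat)
qed

locale colour_sequentialization =
  fixes q n s :: nat and h :: "nat list \<Rightarrow> nat list" and c :: "nat \<Rightarrow> nat" and u :: "nat list"
  assumes q_pos: "0 < q"
    and h_in_F: "inF n q h"
    and u_perm: "isPerm n u"
    and colour_less: "\<forall>i<n. c i < s"
    and update_condition: "\<forall>i<n.
           (\<forall>k<n. IG_edge q n h i k \<longrightarrow> pos u i \<le> pos u k)
         \<or> (\<forall>j<n. \<forall>k<n. c j = c i \<and> pos u i < pos u j \<and> IG_edge q n h j k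
                 \<longrightarrow> pos u i \<le> pos u k)"
begin

lemma length_u: "length u = n"
  using u_perm distinct_card unfolding isPerm_def by fastforce

lemma pos_u_less: "v < n \<Longrightarrow> pos u v < n"
  and nth_pos_u: "v < n \<Longrightarrow> u ! pos u v = v"
  using pos_less_length_nth_pos[of v u] u_perm length_u unfolding isPerm_def by auto

lemma pos_u_inj: "v < n \<Longrightarrow> v' < n \<Longrightarrow> pos u v = pos u v' \<Longrightarrow> v = v'"
  by (metis nth_pos_u)

lemma h_cube: "X \<in> cube q n \<Longrightarrow> h X \<in> cube q n"
  using h_in_F unfolding inF_def by blast

definition colour_sum :: "nat \<Rightarrow> nat list \<Rightarrow> nat" where
  "colour_sum a X = (\<Sum>j | j < n \<and> c j = a. h X ! j) mod q"

definition update_word :: "nat list" where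
  "update_word = [n..<n + s] @ u"

text \<open>The state after the first t letters of update_word have been applied to x; coordinate
n + a holds the checksum of colour a.\<close>
definition stage :: "nat \<Rightarrow> nat list \<Rightarrow> nat list" where
  "stage t x = map (\<lambda>v.
      if v < n then (if s + pos u v < t then h (take n x) ! v else x ! v)
      else (if v - n < t then colour_sum (v - n) (take n x) else x ! v)) [0..<n + s]"

text \<open>The value at a vertex v is read off an arbitrary initial configuration leading to the
current stage; reducing modulo q only matters for states that are never reached.\<close>
definition seq_map :: "nat list \<Rightarrow> nat list" where
  "seq_map z = map (\<lambda>v. (if v < n
      then h (take n (SOME y. y \<in> cube q (n + s) \<and> stage (s + pos u v) y = z)) ! v
      else colour_sum (v - n) (take n z)) mod q) [0..<n + s]"

lemma length_stage: "length (stage t x) = n + s"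
  unfolding stage_def by simp

lemma stage_eq_imp_h_nth_eq:
  "stage t x = stage t y \<Longrightarrow> v < n \<Longrightarrow> s + pos u v < t \<Longrightarrow> h (take n x) ! v = h (take n y) ! v"
  by (drule arg_cong[where f = "\<lambda>z. z ! v"]) (simp add: stage_def)

lemma stage_eq_imp_nth_eq:
  "stage t x = stage t y \<Longrightarrow> v < n \<Longrightarrow> t \<le> s + pos u v \<Longrightarrow> take n x ! v = take n y ! v"
  by (drule arg_cong[where f = "\<lambda>z. z ! v"]) (simp add: stage_def)

lemma stage_eq_imp_colour_sum_eq:
  "stage t x = stage t y \<Longrightarrow> a < s \<Longrightarrow> a < t \<Longrightarrow> colour_sum a (take n x) = colour_sum a (take n y)"
  by (drule arg_cong[where f = "\<lambda>z. z ! (n + a)"]) (simp add: stage_def)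

lemma stage_determines_h_nth_if_neighbours_pending:
  assumes "x \<in> cube q (n + s)" "y \<in> cube q (n + s)"
    and eq: "stage (s + pos u i) x = stage (s + pos u i) y"
    and "j < n" and pending: "\<forall>k<n. IG_edge q n h j k \<longrightarrow> pos u i \<le> pos u k"
  shows "h (take n x) ! j = h (take n y) ! j"
proof (rule nth_eq_if_in_neighbours_agree[OF take_cube[OF assms(1)] take_cube[OF assms(2)] \<open>j < n\<close>])
  show "\<forall>k<n. IG_arc q n h k j \<longrightarrow> take n x ! k = take n y ! k"
    using pending stage_eq_imp_nth_eq[OF eq] unfolding IG_edge_def by auto
qed

lemma stage_determines_h_nth:
  assumes x: "x \<in> cube q (n + s)" and y: "y \<in> cube q (n + s)" and "i < n"
    and eq: "stage (s + pos u i) x = stage (s + pos u i) y"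
  shows "h (take n x) ! i = h (take n y) ! i"
  using update_condition[rule_format, OF \<open>i < n\<close>]
proof
  assume "\<forall>k<n. IG_edge q n h i k \<longrightarrow> pos u i \<le> pos u k"
  then show ?thesis using stage_determines_h_nth_if_neighbours_pending[OF x y eq \<open>i < n\<close>] by blast
next
  assume later: "\<forall>j<n. \<forall>k<n. c j = c i \<and> pos u i < pos u j \<and> IG_edge q n h j k
                   \<longrightarrow> pos u i \<le> pos u k"
  define J where "J = {j. j < n \<and> c j = c i}"
  have others: "h (take n x) ! j = h (take n y) ! j" if "j \<in> J - {i}" for j
  proof -
    from that have j: "j < n" "c j = c i" "j \<noteq> i" unfolding J_def by auto
    then have "pos u j < pos u i \<or> pos u i < pos u j" using pos_u_inj \<open>i < n\<close> by fastforce
    then show ?thesis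
      using stage_eq_imp_h_nth_eq[OF eq] stage_determines_h_nth_if_neighbours_pending[OF x y eq]
        later j by auto
  qed
  have "colour_sum (c i) (take n x) = colour_sum (c i) (take n y)"
    using stage_eq_imp_colour_sum_eq[OF eq] colour_less \<open>i < n\<close> by simp
  moreover have "h (take n x) ! i < q" "h (take n y) ! i < q"
    using h_cube[OF take_cube[OF x]] h_cube[OF take_cube[OF y]] \<open>i < n\<close>
    unfolding cube_def by auto
  ultimately show ?thesis
    using sum_mod_eq_imp_eq_at[of J i] others \<open>i < n\<close> unfolding colour_sum_def J_def by auto
qed

lemma stage_Suc_colour:
  assumes x: "x \<in> cube q (n + s)" and "t < s"
  shows "upd seq_map (update_word ! t) (stage t x) = stage (Suc t) x"
proof -
  have "take n (stage t x) = take n x"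
    by (rule nth_equalityI) (use x \<open>t < s\<close> in \<open>auto simp: stage_def cube_def\<close>)
  then have "seq_map (stage t x) ! (n + t) = colour_sum t (take n x)"
    using \<open>t < s\<close> q_pos unfolding seq_map_def colour_sum_def by simp
  moreover have "update_word ! t = n + t" using \<open>t < s\<close> unfolding update_word_def by (simp add: nth_append)
  ultimately show ?thesis unfolding upd_def
    by (intro nth_equalityI) (use \<open>t < s\<close> in \<open>auto simp: length_stage stage_def nth_list_update\<close>)
qed

lemma stage_Suc_vertex:
  assumes x: "x \<in> cube q (n + s)" and "s \<le> t" "t < n + s"
  shows "upd seq_map (update_word ! t) (stage t x) = stage (Suc t) x"
proof -
  define i where "i = u ! (t - s)"
  have "i < n" using assms u_perm length_u nth_mem unfolding i_def isPerm_def by fastforce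
  have t_eq: "t = s + pos u i"
    using pos_nth[of u "t - s"] u_perm length_u assms unfolding i_def isPerm_def by auto
  have word: "update_word ! t = i" using \<open>s \<le> t\<close> unfolding update_word_def i_def by (simp add: nth_append)
  define y where "y = (SOME y. y \<in> cube q (n + s) \<and> stage (s + pos u i) y = stage t x)"
  have "y \<in> cube q (n + s) \<and> stage (s + pos u i) y = stage t x"
    unfolding y_def by (rule someI[of _ x]) (use x t_eq in auto)
  then have "h (take n y) ! i = h (take n x) ! i"
    using stage_determines_h_nth x \<open>i < n\<close> t_eq by blast
  moreover have "h (take n x) ! i < q"
    using h_cube[OF take_cube[OF x]] \<open>i < n\<close> unfolding cube_def by auto
  ultimately have "seq_map (stage t x) ! i = h (take n x) ! i"
    using \<open>i < n\<close> unfolding seq_map_def y_def by simp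
  moreover have "v < n \<Longrightarrow> (s + pos u v < Suc t) = (s + pos u v < t \<or> v = i)" for v
    using t_eq pos_u_inj[of v i] \<open>i < n\<close> by (auto simp: less_Suc_eq)
  ultimately show ?thesis unfolding upd_def word
    by (intro nth_equalityI) (use \<open>s \<le> t\<close> \<open>i < n\<close> in \<open>auto simp: length_stage stage_def nth_list_update\<close>)
qed

lemma seq_map_in_F: "inF (n + s) q seq_map"
  unfolding inF_def seq_map_def cube_def using q_pos by auto

lemma update_word_perm: "isPerm (n + s) update_word"
  using u_perm unfolding isPerm_def update_word_def by auto

lemma pos_update_word: "v < n \<Longrightarrow> pos update_word v = s + pos u v"
  using pos_nth[of update_word "s + pos u v"] update_word_perm pos_u_less[of v] nth_pos_u[of v] length_u
  unfolding update_word_def isPerm_def by (simp add: nth_append)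

lemma update_word_respects: "respects_order n u update_word"
  unfolding respects_order_def by (simp add: pos_update_word)

lemma sequentializes_seq_map: "sequentializes q n (n + s) seq_map update_word h"
  unfolding sequentializes_def
proof
  fix x assume x: "x \<in> cube q (n + s)"
  have "fseq seq_map update_word x = stage (length update_word) x"
  proof (rule fseq_trajectory)
    show "stage 0 x = x" by (rule nth_equalityI) (use x in \<open>auto simp: stage_def cube_def\<close>)
    show "upd seq_map (update_word ! t) (stage t x) = stage (Suc t) x" if "t < length update_word" for t
      using that stage_Suc_colour[OF x] stage_Suc_vertex[OF x] length_u
      unfolding update_word_def by (cases "t < s") auto
  qed
  moreover have "length update_word = n + s" using length_u unfolding update_word_def by simp
  moreover have "length (h (take n x)) = n" using h_cube[OF take_cube[OF x]] unfolding cube_def by simp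
  ultimately show "take n (fseq seq_map update_word x) = h (take n x)"
    by (intro nth_equalityI) (auto simp: stage_def pos_u_less)
qed

lemma kappa_le: "kappa q n h u \<le> s"
  unfolding kappa_def
  by (rule Least_le)
    (use seq_map_in_F update_word_perm update_word_respects sequentializes_seq_map in blast)

end

theorem mainTheorem14:
  fixes q n s :: nat and h :: "nat list \<Rightarrow> nat list" and c :: "nat \<Rightarrow> nat" and u :: "nat list"
  assumes "q \<ge> 2" and "n \<ge> 1" and "inF n q h"
    and "s \<ge> 1" and "\<forall>i<n. c i < s" and "isPerm n u"
    and "\<forall>i<n.
           (\<forall>k<n. IG_edge q n h i k \<longrightarrow> pos u i \<le> pos u k)
         \<or> (\<forall>j<n. \<forall>k<n. c j = c i \<and> pos u i < pos u j \<and> IG_edge q n h j k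
                 \<longrightarrow> pos u i \<le> pos u k)"
  shows "kappa q n h u \<le> s"
proof -
  interpret colour_sequentialization q n s h c u
    using assms by unfold_locales auto
  show ?thesis by (rule kappa_le)
qed

end
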